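(* Let $X$ and $Y$ be topological spaces. If $C(X)$ has the countable sup property and $Y$ is separable, then $C(X\times Y)$ has the countable sup property.
   Context: $C(Z)$ is the vector lattice of real-valued continuous functions on $Z$ with the pointwise order; $X\times Y$ has the product topology. A vector lattice has the countable sup property if every nonempty subset possessing a supremum contains a countable subset with the same supremum. *)

theory Defs
  imports "HOL-Analysis.Analysis"
begin

text \<open>Functions are made extensional (zero outside the carrier) so that each element
  of C(X) is represented by exactly one HOL function.\<close>
definition Cfun :: "'a topology \<Rightarrow> ('a \<Rightarrow> real) set" where
  "Cfun X = {f. continuous_map X euclideanreal f \<and> (\<forall>x. x \<notin> topspace X \<longrightarrow> f x = 0)}"

definition Cle :: "'a topology \<Rightarrow> ('a \<Rightarrow> real) \<Rightarrow> ('a \<Rightarrow> real) \<Rightarrow> bool" where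
  "Cle X f g \<longleftrightarrow> (\<forall>x\<in>topspace X. f x \<le> g x)"

definition is_sup_C :: "'a topology \<Rightarrow> ('a \<Rightarrow> real) set \<Rightarrow> ('a \<Rightarrow> real) \<Rightarrow> bool" where
  "is_sup_C X S s \<longleftrightarrow> s \<in> Cfun X \<and> (\<forall>f\<in>S. Cle X f s) \<and>
     (\<forall>u\<in>Cfun X. (\<forall>f\<in>S. Cle X f u) \<longrightarrow> Cle X s u)"

definition countable_sup_property :: "'a topology \<Rightarrow> bool" where
  "countable_sup_property X \<longleftrightarrow>
     (\<forall>S s. S \<subseteq> Cfun X \<and> S \<noteq> {} \<and> is_sup_C X S s \<longrightarrow>
        (\<exists>T. T \<subseteq> S \<and> countable T \<and> is_sup_C X T s))"

end

theory Submission
  imports Defs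
begin

text \<open>An upper bound s of S in C(Z) is its supremum iff for every e > 0 the sets where some
  f in S exceeds s - e together meet every nonempty cozero set. Hence C(Z) has the countable sup
  property iff every family of cozero sets whose union meets every nonempty cozero set has a
  countable subfamily with the same property. This condition passes to X \<times> Y for separable Y:
  a nonempty cozero set G meets some member W of the family, G \<inter> W contains a rectangle U \<times> V,
  and V contains a point y of a countable dense set D. The slice of G \<inter> W at y is a nonempty
  cozero set of X inside the union of the slices of the family at y, so applying the condition
  on X once for each y in D yields countably many members that meet every such G.\<close>

definition cozero_set :: "'a topology \<Rightarrow> 'a set \<Rightarrow> bool" where
  "cozero_set Z C \<longleftrightarrow> (\<exists>g. continuous_map Z euclideanreal g \<and> C = {z\<in>topspace Z. g z \<noteq> 0})"

definition cozero_dense :: "'a topology \<Rightarrow> 'a set \<Rightarrow> bool" where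
  "cozero_dense Z A \<longleftrightarrow> (\<forall>C. cozero_set Z C \<and> C \<noteq> {} \<longrightarrow> C \<inter> A \<noteq> {})"

definition cozero_weakly_lindelof :: "'a topology \<Rightarrow> bool" where
  "cozero_weakly_lindelof Z \<longleftrightarrow>
     (\<forall>\<F>. (\<forall>C\<in>\<F>. cozero_set Z C) \<and> cozero_dense Z (\<Union>\<F>) \<longrightarrow>
        (\<exists>\<G>\<subseteq>\<F>. countable \<G> \<and> cozero_dense Z (\<Union>\<G>)))"

lemma cozero_weakly_lindelofD:
  assumes "cozero_weakly_lindelof Z" "\<And>C. C \<in> \<F> \<Longrightarrow> cozero_set Z C" "cozero_dense Z (\<Union>\<F>)"
  obtains \<G> where "\<G> \<subseteq> \<F>" "countable \<G>" "cozero_dense Z (\<Union>\<G>)"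
  using assms unfolding cozero_weakly_lindelof_def by blast

lemma countable_sup_propertyD:
  assumes "countable_sup_property Z" "S \<subseteq> Cfun Z" "S \<noteq> {}" "is_sup_C Z S s"
  obtains T where "T \<subseteq> S" "countable T" "is_sup_C Z T s"
  using assms unfolding countable_sup_property_def by blast

lemma cozero_setI: "continuous_map Z euclideanreal g \<Longrightarrow> cozero_set Z {z\<in>topspace Z. g z \<noteq> 0}"
  unfolding cozero_set_def by blast

lemma cozero_set_openin: "cozero_set Z C \<Longrightarrow> openin Z C"
  unfolding cozero_set_def
  using openin_continuous_map_preimage[of Z euclideanreal _ "-{0}"] by fastforce

lemma cozero_set_Int: "cozero_set Z A \<Longrightarrow> cozero_set Z B \<Longrightarrow> cozero_set Z (A \<inter> B)"
proof -
  assume "cozero_set Z A" "cozero_set Z B"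
  then obtain f g where f: "continuous_map Z euclideanreal f" "A = {z\<in>topspace Z. f z \<noteq> 0}"
    and g: "continuous_map Z euclideanreal g" "B = {z\<in>topspace Z. g z \<noteq> 0}"
    unfolding cozero_set_def by blast
  have "A \<inter> B = {z\<in>topspace Z. f z * g z \<noteq> 0}"
    using f(2) g(2) by auto
  then show ?thesis
    using f(1) g(1) by (simp only:) (intro cozero_setI continuous_map_real_mult)
qed

lemma cozero_set_less:
  assumes "continuous_map Z euclideanreal f" "continuous_map Z euclideanreal g"
  shows "cozero_set Z {z\<in>topspace Z. g z < f z}"
proof -
  have "{z\<in>topspace Z. g z < f z} = {z\<in>topspace Z. max 0 (f z - g z) \<noteq> 0}"
    by auto
  then show ?thesis
    using assms by (simp only:) (intro cozero_setI continuous_intros)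
qed

lemma cozero_dense_mono: "cozero_dense Z A \<Longrightarrow> A \<subseteq> B \<Longrightarrow> cozero_dense Z B"
  unfolding cozero_dense_def by blast

lemma Cfun_imp_continuous_map: "f \<in> Cfun Z \<Longrightarrow> continuous_map Z euclideanreal f"
  unfolding Cfun_def by auto

lemma Cfun_restrict:
  assumes "continuous_map Z euclideanreal f"
  shows "(\<lambda>z. if z \<in> topspace Z then f z else 0) \<in> Cfun Z"
proof -
  have "continuous_map Z euclideanreal (\<lambda>z. if z \<in> topspace Z then f z else 0)"
    using assms by (rule continuous_map_eq) simp
  then show ?thesis
    unfolding Cfun_def by simp
qed

lemma Cfun_bump_in_cozero:
  assumes g: "continuous_map Z euclideanreal g" and z: "z \<in> topspace Z" "g z \<noteq> 0"
  obtains f where "f \<in> Cfun Z" "\<forall>x. f x \<le> 1" "f z = 1" "\<forall>x\<in>topspace Z. f x \<noteq> 0 \<longrightarrow> g x \<noteq> 0"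
proof -
  obtain n where "1 / \<bar>g z\<bar> < real n"
    using reals_Archimedean2 by blast
  then have n: "1 < real n * \<bar>g z\<bar>"
    using z(2) by (simp add: field_simps)
  define f where "f x = (if x \<in> topspace Z then min 1 (real n * \<bar>g x\<bar>) else 0)" for x
  have "f \<in> Cfun Z"
    unfolding f_def using g by (intro Cfun_restrict continuous_intros)
  moreover have "\<forall>x. f x \<le> 1" "f z = 1" "\<forall>x\<in>topspace Z. f x \<noteq> 0 \<longrightarrow> g x \<noteq> 0"
    using z n by (auto simp: f_def)
  ultimately show thesis
    using that by blast
qed

lemma is_sup_C_imp_cozero_dense:
  assumes sup: "is_sup_C Z S s" and e: "e > 0"
  shows "cozero_dense Z (\<Union>f\<in>S. {z\<in>topspace Z. s z - e < f z})"
  unfolding cozero_dense_def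
proof (intro allI impI notI)
  fix C assume C: "cozero_set Z C \<and> C \<noteq> {}"
    and disjoint: "C \<inter> (\<Union>f\<in>S. {z\<in>topspace Z. s z - e < f z}) = {}"
  obtain g where g: "continuous_map Z euclideanreal g" "C = {z\<in>topspace Z. g z \<noteq> 0}"
    using C unfolding cozero_set_def by blast
  have s: "s \<in> Cfun Z" "\<forall>f\<in>S. Cle Z f s"
    using sup unfolding is_sup_C_def by auto
  \<comment> \<open>lowering s by e on C gives a smaller upper bound\<close>
  define u where "u z = (if z \<in> topspace Z then s z - e * min 1 \<bar>g z\<bar> else 0)" for z
  have u: "u \<in> Cfun Z"
    unfolding u_def using g(1) Cfun_imp_continuous_map[OF s(1)]
    by (intro Cfun_restrict continuous_intros)
  have "Cle Z f u" if f: "f \<in> S" for f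
    unfolding Cle_def
  proof
    fix z assume z: "z \<in> topspace Z"
    show "f z \<le> u z"
    proof (cases "g z = 0")
      case True
      then show ?thesis
        using s(2) f z unfolding Cle_def u_def by auto
    next
      case False
      then have "\<not> s z - e < f z"
        using disjoint f z g(2) by blast
      then have "f z \<le> s z - e"
        by linarith
      moreover have "e * min 1 \<bar>g z\<bar> \<le> e"
        using e by (simp add: mult_left_le)
      ultimately show ?thesis
        unfolding u_def using z by auto
    qed
  qed
  then have "Cle Z s u"
    using sup u unfolding is_sup_C_def by auto
  moreover obtain z where "z \<in> topspace Z" "g z \<noteq> 0"
    using C g(2) by auto
  moreover have "u z < s z" if "z \<in> topspace Z" "g z \<noteq> 0" for z
    using that e unfolding u_def by auto
  ultimately show False
    unfolding Cle_def by force
qed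

lemma is_sup_C_if_cozero_dense:
  assumes s: "s \<in> Cfun Z" and ub: "\<forall>f\<in>S. Cle Z f s"
    and dense: "\<And>n. cozero_dense Z (\<Union>f\<in>S. {z\<in>topspace Z. s z - 1 / real (Suc n) < f z})"
  shows "is_sup_C Z S s"
  unfolding is_sup_C_def
proof (intro conjI s ub ballI impI)
  fix u assume u: "u \<in> Cfun Z" and u_ub: "\<forall>f\<in>S. Cle Z f u"
  show "Cle Z s u"
    unfolding Cle_def
  proof (rule ballI, rule ccontr)
    fix z0 assume z0: "z0 \<in> topspace Z" "\<not> s z0 \<le> u z0"
    then obtain n where n: "1 / real (Suc n) < s z0 - u z0"
      using reals_Archimedean[of "s z0 - u z0"] by (auto simp: inverse_eq_divide)
    let ?C = "{z\<in>topspace Z. u z + 1 / real (Suc n) < s z}"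
    have "cozero_set Z ?C"
      using Cfun_imp_continuous_map[OF s] Cfun_imp_continuous_map[OF u]
      by (intro cozero_set_less continuous_intros)
    moreover have "?C \<noteq> {}"
      using z0 n by auto
    ultimately obtain z f where "z \<in> ?C" "f \<in> S" "s z - 1 / real (Suc n) < f z"
      using dense[of n] unfolding cozero_dense_def by blast
    moreover have "f z \<le> u z"
      using u_ub \<open>f \<in> S\<close> \<open>z \<in> ?C\<close> unfolding Cle_def by auto
    ultimately show False
      by auto
  qed
qed

subsection \<open>The countable sup property in terms of cozero sets\<close>

lemma countable_sup_property_if_cozero_weakly_lindelof:
  assumes "cozero_weakly_lindelof Z"
  shows "countable_sup_property Z"
  unfolding countable_sup_property_def
proof (intro allI impI)
  fix S s assume "S \<subseteq> Cfun Z \<and> S \<noteq> {} \<and> is_sup_C Z S s"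
  then have S: "S \<subseteq> Cfun Z" and sup: "is_sup_C Z S s"
    by auto
  then have s: "s \<in> Cfun Z" and ub: "\<forall>f\<in>S. Cle Z f s"
    unfolding is_sup_C_def by auto
  define A where "A n f = {z\<in>topspace Z. s z - 1 / real (Suc n) < f z}" for n f
  have "\<exists>T\<subseteq>S. countable T \<and> cozero_dense Z (\<Union>(A n ` T))" for n
  proof -
    have "cozero_set Z (A n f)" if "f \<in> S" for f
    proof -
      have "continuous_map Z euclideanreal f"
        using that S Cfun_imp_continuous_map by blast
      then show ?thesis
        unfolding A_def using Cfun_imp_continuous_map[OF s] by (intro cozero_set_less continuous_intros)
    qed
    moreover have "cozero_dense Z (\<Union>(A n ` S))"
      unfolding A_def by (rule is_sup_C_imp_cozero_dense[OF sup]) simp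
    ultimately obtain \<G> where "\<G> \<subseteq> A n ` S" "countable \<G>" "cozero_dense Z (\<Union>\<G>)"
      using cozero_weakly_lindelofD[OF assms, of "A n ` S"] by blast
    moreover from this obtain T where "T \<subseteq> S" "countable T" "\<G> = A n ` T"
      using countable_subset_image[of \<G> "A n" S] by blast
    ultimately show ?thesis
      by blast
  qed
  then obtain T where T: "\<And>n. T n \<subseteq> S" "\<And>n. countable (T n)"
    "\<And>n. cozero_dense Z (\<Union>(A n ` T n))"
    by metis
  have "is_sup_C Z (\<Union>n. T n) s"
  proof (rule is_sup_C_if_cozero_dense[OF s])
    show "\<forall>f\<in>\<Union>n. T n. Cle Z f s"
      using T(1) ub by blast
    show "cozero_dense Z (\<Union>f\<in>\<Union>n. T n. {z\<in>topspace Z. s z - 1 / real (Suc n) < f z})" for n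
      using T(3)[of n] by (rule cozero_dense_mono) (auto simp: A_def)
  qed
  moreover have "(\<Union>n. T n) \<subseteq> S" "countable (\<Union>n. T n)"
    using T(1,2) by (auto intro: UN_least)
  ultimately show "\<exists>T'\<subseteq>S. countable T' \<and> is_sup_C Z T' s"
    by blast
qed

definition subordinate_functions :: "'a topology \<Rightarrow> 'a set set \<Rightarrow> ('a \<Rightarrow> real) set" where
  "subordinate_functions Z \<F> =
     {f\<in>Cfun Z. (\<forall>z. f z \<le> 1) \<and> (\<exists>C\<in>\<F>. \<forall>z\<in>topspace Z. f z \<noteq> 0 \<longrightarrow> z \<in> C)}"

lemma indicator_topspace_in_Cfun: "indicator (topspace Z) \<in> Cfun Z"
proof -
  have "indicator (topspace Z) = (\<lambda>z. if z \<in> topspace Z then 1 else (0::real))"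
    by (auto simp: indicator_def)
  then show ?thesis
    by (simp only:) (intro Cfun_restrict continuous_intros)
qed

lemma is_sup_C_subordinate_functions:
  assumes \<F>: "\<forall>C\<in>\<F>. cozero_set Z C" and dense: "cozero_dense Z (\<Union>\<F>)"
  shows "is_sup_C Z (subordinate_functions Z \<F>) (indicator (topspace Z))"
proof (rule is_sup_C_if_cozero_dense[OF indicator_topspace_in_Cfun])
  let ?S = "subordinate_functions Z \<F>"
  show "\<forall>f\<in>?S. Cle Z f (indicator (topspace Z))"
    unfolding subordinate_functions_def Cle_def by simp
  fix n
  show "cozero_dense Z (\<Union>f\<in>?S. {z\<in>topspace Z. indicator (topspace Z) z - 1 / real (Suc n) < f z})"
    unfolding cozero_dense_def
  proof (intro allI impI)
    fix C' assume "cozero_set Z C' \<and> C' \<noteq> {}"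
    then obtain z C where z: "z \<in> C'" "C \<in> \<F>" "z \<in> C"
      using dense unfolding cozero_dense_def by blast
    then obtain g where g: "continuous_map Z euclideanreal g" "C = {z\<in>topspace Z. g z \<noteq> 0}"
      using \<F> unfolding cozero_set_def by blast
    then have "z \<in> topspace Z" "g z \<noteq> 0"
      using z(3) by auto
    then obtain f where f: "f \<in> Cfun Z" "\<forall>x. f x \<le> 1" "f z = 1"
      "\<forall>x\<in>topspace Z. f x \<noteq> 0 \<longrightarrow> g x \<noteq> 0"
      by (rule Cfun_bump_in_cozero[OF g(1)])
    have "\<forall>x\<in>topspace Z. f x \<noteq> 0 \<longrightarrow> x \<in> C"
      using f(4) unfolding g(2) by blast
    then have "f \<in> ?S"
      unfolding subordinate_functions_def using f(1,2) z(2) by blast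
    moreover have "indicator (topspace Z) z - 1 / real (Suc n) < f z"
      using \<open>z \<in> topspace Z\<close> f(3) by simp
    ultimately show "C' \<inter> (\<Union>f\<in>?S. {z\<in>topspace Z. indicator (topspace Z) z - 1 / real (Suc n) < f z}) \<noteq> {}"
      using z(1) \<open>z \<in> topspace Z\<close> by blast
  qed
qed

lemma cozero_weakly_lindelof_if_countable_sup_property:
  assumes csp: "countable_sup_property Z"
  shows "cozero_weakly_lindelof Z"
  unfolding cozero_weakly_lindelof_def
proof (intro allI impI)
  fix \<F> assume \<F>: "(\<forall>C\<in>\<F>. cozero_set Z C) \<and> cozero_dense Z (\<Union>\<F>)"
  let ?S = "subordinate_functions Z \<F>"
  show "\<exists>\<G>\<subseteq>\<F>. countable \<G> \<and> cozero_dense Z (\<Union>\<G>)"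
  proof (cases "\<F> = {}")
    case True
    then show ?thesis
      using \<F> by (intro exI[of _ "{}"]) auto
  next
    case False
    then have "(\<lambda>_. 0) \<in> ?S"
      unfolding subordinate_functions_def Cfun_def by auto
    moreover have "?S \<subseteq> Cfun Z"
      unfolding subordinate_functions_def by blast
    ultimately obtain T where T: "T \<subseteq> ?S" "countable T" "is_sup_C Z T (indicator (topspace Z))"
      using countable_sup_propertyD[OF csp _ _ is_sup_C_subordinate_functions] \<F> by blast
    then have "\<forall>f\<in>T. \<exists>C. C \<in> \<F> \<and> (\<forall>z\<in>topspace Z. f z \<noteq> 0 \<longrightarrow> z \<in> C)"
      unfolding subordinate_functions_def by blast
    then obtain c where c: "\<forall>f\<in>T. c f \<in> \<F> \<and> (\<forall>z\<in>topspace Z. f z \<noteq> 0 \<longrightarrow> z \<in> c f)"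
      by (auto dest!: bchoice)
    have "cozero_dense Z (\<Union>f\<in>T. {z\<in>topspace Z. indicator (topspace Z) z - 1/2 < f z})"
      using is_sup_C_imp_cozero_dense[OF T(3)] by simp
    then have "cozero_dense Z (\<Union>(c ` T))"
      by (rule cozero_dense_mono) (use c in force)
    moreover have "c ` T \<subseteq> \<F>" "countable (c ` T)"
      using c T(2) by auto
    ultimately show ?thesis
      by blast
  qed
qed

lemma countable_sup_property_iff_cozero_weakly_lindelof:
  "countable_sup_property Z \<longleftrightarrow> cozero_weakly_lindelof Z"
  using countable_sup_property_if_cozero_weakly_lindelof
    cozero_weakly_lindelof_if_countable_sup_property by blast

subsection \<open>Products with a separable factor\<close>

lemma cozero_weakly_lindelof_subfamily:
  assumes "cozero_weakly_lindelof Z" and \<A>: "\<forall>A\<in>\<A>. cozero_set Z A"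
  shows "\<exists>\<B>\<subseteq>\<A>. countable \<B> \<and>
           (\<forall>C. cozero_set Z C \<and> C \<noteq> {} \<and> C \<subseteq> \<Union>\<A> \<longrightarrow> C \<inter> \<Union>\<B> \<noteq> {})"
proof -
  define \<F> where "\<F> = \<A> \<union> {C. cozero_set Z C \<and> C \<inter> \<Union>\<A> = {}}"
  have "cozero_dense Z (\<Union>\<F>)"
    unfolding cozero_dense_def
  proof (intro allI impI)
    fix C assume C: "cozero_set Z C \<and> C \<noteq> {}"
    show "C \<inter> \<Union>\<F> \<noteq> {}"
    proof (cases "C \<inter> \<Union>\<A> = {}")
      case True
      then have "C \<in> \<F>"
        using C unfolding \<F>_def by blast
      then show ?thesis
        using C by blast
    next
      case False
      then show ?thesis
        unfolding \<F>_def by blast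
    qed
  qed
  moreover have "cozero_set Z C" if "C \<in> \<F>" for C
    using that \<A> unfolding \<F>_def by blast
  ultimately obtain \<G> where \<G>: "\<G> \<subseteq> \<F>" "countable \<G>" "cozero_dense Z (\<Union>\<G>)"
    using cozero_weakly_lindelofD[OF assms(1)] by blast
  have "C \<inter> \<Union>(\<G> \<inter> \<A>) \<noteq> {}" if C: "cozero_set Z C" "C \<noteq> {}" "C \<subseteq> \<Union>\<A>" for C
  proof -
    obtain x E where "x \<in> C" "E \<in> \<G>" "x \<in> E"
      using \<G>(3) C(1,2) unfolding cozero_dense_def by blast
    moreover have "E \<inter> \<Union>\<A> \<noteq> {}"
      using \<open>x \<in> C\<close> \<open>x \<in> E\<close> C(3) by blast
    then have "E \<in> \<A>"
      using \<G>(1) \<open>E \<in> \<G>\<close> unfolding \<F>_def by blast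
    ultimately show ?thesis
      by blast
  qed
  moreover have "countable (\<G> \<inter> \<A>)"
    using countable_subset[OF Int_lower1 \<G>(2)] .
  ultimately show ?thesis
    by blast
qed

definition slice :: "'a topology \<Rightarrow> 'b \<Rightarrow> ('a \<times> 'b) set \<Rightarrow> 'a set" where
  "slice X y W = {x\<in>topspace X. (x, y) \<in> W}"

lemma cozero_set_slice:
  assumes "cozero_set (prod_topology X Y) W" "y \<in> topspace Y"
  shows "cozero_set X (slice X y W)"
proof -
  obtain g where g: "continuous_map (prod_topology X Y) euclideanreal g"
    "W = {z\<in>topspace (prod_topology X Y). g z \<noteq> 0}"
    using assms(1) unfolding cozero_set_def by auto
  have "continuous_map X (prod_topology X Y) (\<lambda>x. (x, y))"
    using assms(2) by (intro continuous_map_pairedI) auto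
  then have "continuous_map X euclideanreal (\<lambda>x. g (x, y))"
    using continuous_map_compose[OF _ g(1)] by (simp add: o_def)
  moreover have "slice X y W = {x\<in>topspace X. g (x, y) \<noteq> 0}"
    unfolding slice_def g(2) using assms(2) by auto
  ultimately show ?thesis
    by (simp add: cozero_setI)
qed

lemma cozero_weakly_lindelof_slices:
  assumes X: "cozero_weakly_lindelof X" and \<F>: "\<forall>W\<in>\<F>. cozero_set (prod_topology X Y) W"
    and y: "y \<in> topspace Y"
  shows "\<exists>I\<subseteq>\<F>. countable I \<and>
           (\<forall>C. cozero_set X C \<and> C \<noteq> {} \<and> C \<subseteq> \<Union>(slice X y ` \<F>) \<longrightarrow> C \<inter> \<Union>(slice X y ` I) \<noteq> {})"
proof -
  have slices: "\<forall>A\<in>slice X y ` \<F>. cozero_set X A"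
    using \<F> cozero_set_slice[OF _ y] by blast
  obtain \<B> where \<B>: "\<B> \<subseteq> slice X y ` \<F>" "countable \<B>"
    "\<forall>C. cozero_set X C \<and> C \<noteq> {} \<and> C \<subseteq> \<Union>(slice X y ` \<F>) \<longrightarrow> C \<inter> \<Union>\<B> \<noteq> {}"
    using cozero_weakly_lindelof_subfamily[OF X slices] by blast
  then obtain I where I: "I \<subseteq> \<F>" "countable I" "\<B> = slice X y ` I"
    using countable_subset_image[of \<B> "slice X y" \<F>] by blast
  show ?thesis
    using I(1,2) \<B>(3) unfolding I(3) by blast
qed

lemma cozero_weakly_lindelof_prod:
  assumes X: "cozero_weakly_lindelof X" and "separable_space Y"
  shows "cozero_weakly_lindelof (prod_topology X Y)"
  unfolding cozero_weakly_lindelof_def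
proof (intro allI impI)
  obtain D where D: "countable D" "D \<subseteq> topspace Y"
    "\<And>V. openin Y V \<Longrightarrow> V \<noteq> {} \<Longrightarrow> D \<inter> V \<noteq> {}"
    using assms(2) unfolding separable_space_def dense_intersects_open by blast
  fix \<F> assume \<F>: "(\<forall>W\<in>\<F>. cozero_set (prod_topology X Y) W) \<and> cozero_dense (prod_topology X Y) (\<Union>\<F>)"
  have "\<exists>I\<subseteq>\<F>. countable I \<and> (\<forall>C. cozero_set X C \<and> C \<noteq> {} \<and> C \<subseteq> \<Union>(slice X y ` \<F>)
          \<longrightarrow> C \<inter> \<Union>(slice X y ` I) \<noteq> {})" if "y \<in> D" for y
    using D(2) that by (intro cozero_weakly_lindelof_slices[OF X conjunct1[OF \<F>]]) blast
  then have "\<exists>I. \<forall>y\<in>D. I y \<subseteq> \<F> \<and> countable (I y) \<and> (\<forall>C. cozero_set X C \<and> C \<noteq> {}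
      \<and> C \<subseteq> \<Union>(slice X y ` \<F>) \<longrightarrow> C \<inter> \<Union>(slice X y ` I y) \<noteq> {})"
    by (intro bchoice ballI) blast
  then obtain I where I: "\<forall>y\<in>D. I y \<subseteq> \<F> \<and> countable (I y) \<and> (\<forall>C. cozero_set X C \<and> C \<noteq> {}
      \<and> C \<subseteq> \<Union>(slice X y ` \<F>) \<longrightarrow> C \<inter> \<Union>(slice X y ` I y) \<noteq> {})"
    by blast
  have "cozero_dense (prod_topology X Y) (\<Union>y\<in>D. \<Union>(I y))"
    unfolding cozero_dense_def
  proof (intro allI impI)
    fix G assume G: "cozero_set (prod_topology X Y) G \<and> G \<noteq> {}"
    then have "G \<inter> \<Union>\<F> \<noteq> {}"
      using \<F> unfolding cozero_dense_def by blast
    then obtain z W where "z \<in> G" "W \<in> \<F>" "z \<in> W"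
      by blast
    moreover obtain x0 y0 where "z = (x0, y0)"
      by (cases z)
    ultimately have W: "(x0, y0) \<in> G" "W \<in> \<F>" "(x0, y0) \<in> W"
      by auto
    have "cozero_set (prod_topology X Y) W"
      using \<F> W(2) by blast
    with G have GW: "cozero_set (prod_topology X Y) (G \<inter> W)"
      by (simp add: cozero_set_Int)
    then have "openin (prod_topology X Y) (G \<inter> W)"
      by (rule cozero_set_openin)
    moreover have "(x0, y0) \<in> G \<inter> W"
      using W(1,3) by (rule IntI)
    ultimately have "\<exists>U V. openin X U \<and> openin Y V \<and> x0 \<in> U \<and> y0 \<in> V \<and> U \<times> V \<subseteq> G \<inter> W"
      unfolding openin_prod_topology_alt by blast
    then obtain U V where UV: "openin X U" "openin Y V" "x0 \<in> U" "y0 \<in> V" "U \<times> V \<subseteq> G \<inter> W"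
      by blast
    then obtain y where y: "y \<in> D" "y \<in> V"
      using D(3)[of V] by blast
    have "x0 \<in> slice X y (G \<inter> W)"
      using UV y openin_subset[OF UV(1)] unfolding slice_def by auto
    moreover have "slice X y (G \<inter> W) \<subseteq> \<Union>(slice X y ` \<F>)"
      using W(2) unfolding slice_def by blast
    moreover have "cozero_set X (slice X y (G \<inter> W))"
      using cozero_set_slice[OF GW] D(2) y(1) by blast
    moreover have "\<forall>C. cozero_set X C \<and> C \<noteq> {} \<and> C \<subseteq> \<Union>(slice X y ` \<F>)
        \<longrightarrow> C \<inter> \<Union>(slice X y ` I y) \<noteq> {}"
      using I y(1) by blast
    ultimately have "slice X y (G \<inter> W) \<inter> \<Union>(slice X y ` I y) \<noteq> {}"
      by blast
    then obtain x W' where "x \<in> slice X y (G \<inter> W)" "W' \<in> I y" "x \<in> slice X y W'"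
      by blast
    then have "(x, y) \<in> G \<inter> (\<Union>y\<in>D. \<Union>(I y))"
      using y(1) unfolding slice_def by blast
    then show "G \<inter> (\<Union>y\<in>D. \<Union>(I y)) \<noteq> {}"
      by blast
  qed
  moreover have "countable (\<Union>y\<in>D. I y)" "(\<Union>y\<in>D. I y) \<subseteq> \<F>"
    using I D(1) by auto
  moreover have "\<Union>(\<Union>y\<in>D. I y) = (\<Union>y\<in>D. \<Union>(I y))"
    by blast
  ultimately show "\<exists>\<G>\<subseteq>\<F>. countable \<G> \<and> cozero_dense (prod_topology X Y) (\<Union>\<G>)"
    by (intro exI[of _ "\<Union>y\<in>D. I y"]) simp
qed

theorem corollary6p3:
  fixes X :: "'a topology" and Y :: "'b topology"
  assumes "countable_sup_property X"
    and "separable_space Y"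
  shows "countable_sup_property (prod_topology X Y)"
  using assms cozero_weakly_lindelof_prod
  by (simp add: countable_sup_property_iff_cozero_weakly_lindelof)

end
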